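(* Let $A^l\in\mathfrak{so}(q_l)^{p_l}$, $l=1,\dots,n$, be tuples with linearly independent components whose corresponding two-step nilpotent Lie algebras are indecomposable. Then the Lie algebra corresponding to the iterated adjoin $C=(\cdots((A^1+_aA^2)+_aA^3)\cdots)+_aA^n$ is indecomposable. Likewise, the Lie algebra corresponding to $A^1+_a\{A^2,\dots,A^n\}$ is indecomposable.
   Context: Adjoin of two tuples: for $A\in\mathfrak{so}(q_1)^{n_1}$ and $B\in\mathfrak{so}(q_2)^m$, $A+_aB\in\mathfrak{so}(q_1+q_2)^{n_1+m-1}$ has components $\mathrm{diag}(A_i,0)$ for $i<n_1$, $\mathrm{diag}(A_{n_1},B_1)$ for $i=n_1$, and $\mathrm{diag}(0,B_{i-n_1+1})$ for $n_1<i\le n_1+m-1$. Multiple adjoin: $A+_a\{D^1,\dots,D^m\}$ is block diagonal with respect to $\mathbb R^{q_0}\oplus\mathbb R^{q_1}\oplus\dots\oplus\mathbb R^{q_m}$. Its first $p_0-1$ components are $\mathrm{diag}(A_l,0,\dots,0)$. Its $p_0$-th component is $\mathrm{diag}(A_{p_0},D^1_1,\dots,D^m_1)$. Then follow $D^1_2,\dots,D^1_{p_1},D^2_2,\dots,D^m_{p_m}$, each in its own block with zeros elsewhere. For $C\in\mathfrak{so}(q)^p$ with linearly independent components, the corresponding Lie algebra on $\mathbb R^{q+p}$ has $[e_i,e_j]=\sum_k(C_k)_{ij}e_{q+k}$ for $i,j\le q$ and all other brackets zero. Indecomposable means not a direct sum of two nonzero ideals. *)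

theory Defs
  imports Complex_Main
begin

text \<open>Real matrices are represented as functions nat => nat => real (0-based
indices). A q x q matrix is one whose entries vanish outside the square
{0..<q} x {0..<q}. A tuple in so(q)^p is a list of length p of such matrices.\<close>

type_synonym mat = "nat \<Rightarrow> nat \<Rightarrow> real"

definition is_so :: "nat \<Rightarrow> mat \<Rightarrow> bool" where
  "is_so q M \<longleftrightarrow> (\<forall>i j. M i j = - M j i) \<and> (\<forall>i j. q \<le> i \<or> q \<le> j \<longrightarrow> M i j = 0)"

definition so_tuple :: "nat \<Rightarrow> mat list \<Rightarrow> bool" where
  "so_tuple q A \<longleftrightarrow> (\<forall>M \<in> set A. is_so q M)"

definition lin_indep_tuple :: "mat list \<Rightarrow> bool" where
  "lin_indep_tuple A \<longleftrightarrow>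
     (\<forall>c :: nat \<Rightarrow> real. (\<forall>i j. (\<Sum>k<length A. c k * (A ! k) i j) = 0) \<longrightarrow> (\<forall>k<length A. c k = 0))"

definition shift_mat :: "nat \<Rightarrow> mat \<Rightarrow> mat" where
  "shift_mat s M = (\<lambda>i j. if s \<le> i \<and> s \<le> j then M (i - s) (j - s) else 0)"

definition mat_add :: "mat \<Rightarrow> mat \<Rightarrow> mat" where
  "mat_add M N = (\<lambda>i j. M i j + N i j)"

text \<open>Adjoin A +_a B for A in so(q1)^n1, B in so(q2)^m (n1, m >= 1).\<close>
definition adjoin :: "nat \<Rightarrow> mat list \<Rightarrow> mat list \<Rightarrow> mat list" where
  "adjoin q1 A B = butlast A @ [mat_add (last A) (shift_mat q1 (hd B))] @ map (shift_mat q1) (tl B)"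

text \<open>Iterated adjoin (...((A1 +_a A2) +_a A3)...) +_a An of a nonempty list of
pairs (q_l, A^l); returns the pair (q_1+...+q_n, C).\<close>
definition iter_adjoin :: "(nat \<times> mat list) list \<Rightarrow> nat \<times> mat list" where
  "iter_adjoin As = foldl (\<lambda>(q, C) (q', B). (q + q', adjoin q C B)) (hd As) (tl As)"

text \<open>Multiple adjoin A +_a {D^1,...,D^m} with A in so(q0)^p0 and
D^l in so(q_l)^(p_l), given as pairs (q_l, D^l).\<close>
definition madj_offset :: "nat \<Rightarrow> (nat \<times> mat list) list \<Rightarrow> nat \<Rightarrow> nat" where
  "madj_offset q0 Ds l = q0 + sum_list (map fst (take l Ds))"

definition multi_adjoin :: "nat \<Rightarrow> mat list \<Rightarrow> (nat \<times> mat list) list \<Rightarrow> mat list" where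
  "multi_adjoin q0 A Ds =
     butlast A
     @ [(\<lambda>i j. last A i j + (\<Sum>l<length Ds. shift_mat (madj_offset q0 Ds l) (hd (snd (Ds ! l))) i j))]
     @ concat (map (\<lambda>l. map (shift_mat (madj_offset q0 Ds l)) (tl (snd (Ds ! l)))) [0..<length Ds])"

text \<open>The two-step nilpotent Lie algebra on R^(q+p) associated with C in so(q)^p:
vectors are functions nat => real vanishing at indices >= q+p, and
[e_i,e_j] = sum_k (C_k)_ij e_(q+k) for i,j < q, all other brackets of basis vectors zero.\<close>
definition la_carrier :: "nat \<Rightarrow> mat list \<Rightarrow> (nat \<Rightarrow> real) set" where
  "la_carrier q C = {x. \<forall>m. q + length C \<le> m \<longrightarrow> x m = 0}"

definition la_bracket :: "nat \<Rightarrow> mat list \<Rightarrow> (nat \<Rightarrow> real) \<Rightarrow> (nat \<Rightarrow> real) \<Rightarrow> (nat \<Rightarrow> real)" where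
  "la_bracket q C x y = (\<lambda>m. if q \<le> m \<and> m < q + length C
      then (\<Sum>i<q. \<Sum>j<q. x i * y j * (C ! (m - q)) i j) else 0)"

definition la_ideal :: "nat \<Rightarrow> mat list \<Rightarrow> (nat \<Rightarrow> real) set \<Rightarrow> bool" where
  "la_ideal q C I \<longleftrightarrow>
     I \<subseteq> la_carrier q C \<and> (\<lambda>_. 0) \<in> I
     \<and> (\<forall>x\<in>I. \<forall>y\<in>I. (\<lambda>m. x m + y m) \<in> I)
     \<and> (\<forall>a::real. \<forall>x\<in>I. (\<lambda>m. a * x m) \<in> I)
     \<and> (\<forall>x\<in>la_carrier q C. \<forall>y\<in>I. la_bracket q C x y \<in> I)"

definition la_indecomposable :: "nat \<Rightarrow> mat list \<Rightarrow> bool" where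
  "la_indecomposable q C \<longleftrightarrow>
     \<not> (\<exists>I J. la_ideal q C I \<and> la_ideal q C J \<and> I \<noteq> {\<lambda>_. 0} \<and> J \<noteq> {\<lambda>_. 0}
            \<and> I \<inter> J = {\<lambda>_. 0}
            \<and> la_carrier q C = {(\<lambda>m. x m + y m) | x y. x \<in> I \<and> y \<in> J})"

end

theory Submission
  imports Defs
begin

(* For C in so(q)^p write B_k(y,x) = y^T C_k x, so that the bracket of
   x, y in R^(q+p) is the vector (B_k(x,y))_k placed in the last p coordinates.
   (1) A decomposition into two nonzero ideals is the same as an idempotent linear map
       P, neither 0 nor the identity, commuting with every ad_x (locale la_projection).
   (2) If C is indecomposable, no nonzero v in R^q is B_k-orthogonal to all of R^q
       (nondegenerate).  For nondegenerate C such a P restricts to an idempotent E on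
       R^q with B_k(y, E x) = sum_j M_kj B_j(y, x) (locale compatible_endo), and for
       independent components P is 0 resp. the identity iff E is.  Conversely every
       compatible E extends to a projection, so for indecomposable C it is 0 or id.
   (3) For the adjoin C of A and B at a position t (locale adjoin_setting), a compatible
       E for C preserves the two blocks and induces compatible maps for A and for B;
       these are 0 or the identity, and the shared component t of C forces them to
       agree.  So E is trivial, hence so is P, and C is indecomposable.
   (4) Iterated and multiple adjoins are repeated adjoins (at the last position of the
       current tuple, resp. of A), so the theorem follows by induction. *)

definition lowpart :: "nat \<Rightarrow> (nat \<Rightarrow> real) \<Rightarrow> (nat \<Rightarrow> real)" where
  "lowpart q x = (\<lambda>i. if i < q then x i else 0)"

definition highpart :: "nat \<Rightarrow> (nat \<Rightarrow> real) \<Rightarrow> (nat \<Rightarrow> real)" where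
  "highpart q x = (\<lambda>i. if i < q then 0 else x i)"

definition unit_vec :: "nat \<Rightarrow> nat \<Rightarrow> real" where
  "unit_vec n = (\<lambda>i. if i = n then 1 else 0)"

definition shift_down :: "nat \<Rightarrow> (nat \<Rightarrow> real) \<Rightarrow> (nat \<Rightarrow> real)" where
  "shift_down s x = (\<lambda>i. x (s + i))"

definition shift_up :: "nat \<Rightarrow> (nat \<Rightarrow> real) \<Rightarrow> (nat \<Rightarrow> real)" where
  "shift_up s x = (\<lambda>i. if s \<le> i then x (i - s) else 0)"

definition bform :: "nat \<Rightarrow> mat \<Rightarrow> (nat \<Rightarrow> real) \<Rightarrow> (nat \<Rightarrow> real) \<Rightarrow> real" where
  "bform q M y x = (\<Sum>i<q. \<Sum>j<q. y i * x j * M i j)"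

lemma lowpart_lowpart [simp]: "lowpart q (lowpart q x) = lowpart q x"
  by (auto simp: lowpart_def)

lemma lowpart_add: "lowpart q (\<lambda>m. x m + y m) = (\<lambda>m. lowpart q x m + lowpart q y m)"
  by (auto simp: lowpart_def)

lemma lowpart_smult: "lowpart q (\<lambda>m. a * x m) = (\<lambda>m. a * lowpart q x m)"
  by (auto simp: lowpart_def)

lemma low_high_split: "x = (\<lambda>m. lowpart q x m + highpart q x m)"
  by (auto simp: lowpart_def highpart_def)

lemma lowpart_split:
  "lowpart (a + b) x = (\<lambda>m. lowpart a x m + shift_up a (lowpart b (shift_down a x)) m)"
  by (auto simp: lowpart_def shift_up_def shift_down_def fun_eq_iff)

lemma shift_down_up [simp]: "shift_down s (shift_up s x) = x"
  by (simp add: shift_down_def shift_up_def)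

lemma shift_up_add: "shift_up s (\<lambda>m. x m + y m) = (\<lambda>m. shift_up s x m + shift_up s y m)"
  by (auto simp: shift_up_def)

lemma shift_up_smult: "shift_up s (\<lambda>m. a * x m) = (\<lambda>m. a * shift_up s x m)"
  by (auto simp: shift_up_def)

lemma shift_down_add: "shift_down s (\<lambda>m. x m + y m) = (\<lambda>m. shift_down s x m + shift_down s y m)"
  by (auto simp: shift_down_def)

lemma shift_down_smult: "shift_down s (\<lambda>m. a * x m) = (\<lambda>m. a * shift_down s x m)"
  by (auto simp: shift_down_def)

lemma shift_up_below: "i < s \<Longrightarrow> shift_up s x i = 0"
  by (simp add: shift_up_def)

lemma shift_down_lowpart: "shift_down s (lowpart s y) i = 0"
  by (simp add: shift_down_def lowpart_def)

lemma shift_down_apply: "shift_down s x i = x (s + i)"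
  by (simp add: shift_down_def)

lemma bform_cong: "(\<forall>i<q. y i = y' i) \<Longrightarrow> (\<forall>i<q. x i = x' i) \<Longrightarrow> bform q M y x = bform q M y' x'"
  unfolding bform_def by (intro sum.cong refl) auto

lemma bform_lowpart1 [simp]: "bform q M (lowpart q y) x = bform q M y x"
  by (rule bform_cong) (auto simp: lowpart_def)

lemma bform_lowpart2 [simp]: "bform q M y (lowpart q x) = bform q M y x"
  by (rule bform_cong) (auto simp: lowpart_def)

lemma bform_add2: "bform q M y (\<lambda>m. x m + x' m) = bform q M y x + bform q M y x'"
  unfolding bform_def by (simp add: distrib_left distrib_right sum.distrib)

lemma bform_smult2: "bform q M y (\<lambda>m. a * x m) = a * bform q M y x"
  unfolding bform_def by (simp add: sum_distrib_left mult_ac)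

lemma bform_zero1: "\<forall>i<q. y i = 0 \<Longrightarrow> bform q M y x = 0"
  unfolding bform_def by simp

lemma bform_zero2: "\<forall>i<q. x i = 0 \<Longrightarrow> bform q M y x = 0"
  unfolding bform_def by simp

lemma bform_mat_add: "bform q (\<lambda>i j. M i j + N i j) y x = bform q M y x + bform q N y x"
  unfolding bform_def by (simp add: distrib_left sum.distrib)

lemma bform_unit_vec:
  assumes "a < q" "b < q"
  shows "bform q M (unit_vec a) (unit_vec b) = M a b"
proof -
  have "unit_vec a i * unit_vec b j * M i j = (if j = b then if i = a then M a b else 0 else 0)"
    for i j by (simp add: unit_vec_def)
  then show ?thesis using assms
    unfolding bform_def by (simp add: sum.delta cong: if_cong)
qed

lemma is_so_zero: "is_so q M \<Longrightarrow> q \<le> i \<or> q \<le> j \<Longrightarrow> M i j = 0"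
  unfolding is_so_def by blast

lemma is_so_skew: "is_so q M \<Longrightarrow> M i j = - M j i"
  unfolding is_so_def by blast

lemma is_so_add:
  assumes "is_so q M" "is_so q N"
  shows "is_so q (\<lambda>i j. M i j + N i j)"
proof -
  have "M i j + N i j = - (M j i + N j i)" for i j
    using is_so_skew[OF assms(1), of i j] is_so_skew[OF assms(2), of i j] by simp
  moreover have "M i j + N i j = 0" if "q \<le> i \<or> q \<le> j" for i j
    using is_so_zero[OF assms(1) that] is_so_zero[OF assms(2) that] by simp
  ultimately show ?thesis unfolding is_so_def by blast
qed

lemma is_so_if:
  assumes "c \<Longrightarrow> is_so q M"
  shows "is_so q (\<lambda>i j. if c then M i j else 0)"
proof (cases c)
  case True
  then show ?thesis using assms by simp
qed (simp add: is_so_def)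

lemma is_so_mono:
  assumes "is_so qA M" "qA \<le> q"
  shows "is_so q M"
  using is_so_skew[OF assms(1)] is_so_zero[OF assms(1)] assms(2)
  unfolding is_so_def by (meson order_trans)

lemma is_so_shift:
  assumes "is_so qB N"
  shows "is_so (qA + qB) (shift_mat qA N)"
proof -
  have "shift_mat qA N i j = - shift_mat qA N j i" for i j
    using is_so_skew[OF assms, of "i - qA" "j - qA"] by (simp add: shift_mat_def)
  moreover have "shift_mat qA N i j = 0" if "qA + qB \<le> i \<or> qA + qB \<le> j" for i j
  proof -
    have "qA \<le> i \<and> qA \<le> j \<Longrightarrow> qB \<le> i - qA \<or> qB \<le> j - qA" using that by linarith
    then show ?thesis using is_so_zero[OF assms, of "i - qA" "j - qA"] by (simp add: shift_mat_def)
  qed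
  ultimately show ?thesis unfolding is_so_def by blast
qed

lemma lin_indep_bform:
  assumes "so_tuple q C" "lin_indep_tuple C"
    and "\<And>x y. (\<Sum>k<length C. c k * bform q (C!k) y x) = 0" and "k < length C"
  shows "c k = 0"
proof -
  have "(\<Sum>k<length C. c k * (C ! k) i j) = 0" for i j
  proof (cases "i < q \<and> j < q")
    case True
    then show ?thesis
      using assms(3)[where y = "unit_vec i" and x = "unit_vec j"] by (simp add: bform_unit_vec)
  next
    case False
    then have "(C ! k) i j = 0" if "k < length C" for k
      using assms(1) that is_so_zero unfolding so_tuple_def by (metis not_le nth_mem)
    then show ?thesis by simp
  qed
  then show ?thesis using assms(2,4) unfolding lin_indep_tuple_def by blast
qed

lemma lin_indep_bform_delta:
  assumes "so_tuple q C" "lin_indep_tuple C" "k < length C" "j < length C"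
    and "\<And>x y. (\<Sum>l<length C. c l * bform q (C!l) y x) = c' * bform q (C!k) y x"
  shows "c j = (if j = k then c' else 0)"
proof -
  let ?d = "\<lambda>l. c l - (if l = k then c' else 0)"
  have "(\<Sum>l<length C. ?d l * bform q (C!l) y x) = 0" for x y
    using assms(3) assms(5)[where x = x and y = y]
    by (simp add: left_diff_distrib sum_subtractf if_distrib[where f = "\<lambda>a. a * _"] sum.delta
        cong: if_cong)
  then have "?d j = 0" using lin_indep_bform[OF assms(1,2) _ assms(4), of ?d] by blast
  then show ?thesis by simp
qed

lemma carrier_add: "x \<in> la_carrier q C \<Longrightarrow> y \<in> la_carrier q C \<Longrightarrow> (\<lambda>m. x m + y m) \<in> la_carrier q C"
  by (simp add: la_carrier_def)

lemma carrier_diff: "x \<in> la_carrier q C \<Longrightarrow> y \<in> la_carrier q C \<Longrightarrow> (\<lambda>m. x m - y m) \<in> la_carrier q C"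
  by (simp add: la_carrier_def)

lemma carrier_smult: "x \<in> la_carrier q C \<Longrightarrow> (\<lambda>m. a * x m) \<in> la_carrier q C"
  by (simp add: la_carrier_def)

lemma carrier_zero: "(\<lambda>_. 0) \<in> la_carrier q C"
  by (simp add: la_carrier_def)

lemma lowpart_carrier: "lowpart q x \<in> la_carrier q C"
  by (simp add: la_carrier_def lowpart_def)

lemma highpart_carrier: "x \<in> la_carrier q C \<Longrightarrow> highpart q x \<in> la_carrier q C"
  by (simp add: la_carrier_def highpart_def)

lemma unit_vec_carrier: "j < length C \<Longrightarrow> unit_vec (q + j) \<in> la_carrier q C"
  by (simp add: la_carrier_def unit_vec_def)

lemma bracket_carrier: "la_bracket q C x y \<in> la_carrier q C"
  by (simp add: la_carrier_def la_bracket_def)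

lemma la_bracket_bform:
  "la_bracket q C x y = (\<lambda>m. if q \<le> m \<and> m < q + length C then bform q (C!(m-q)) x y else 0)"
  unfolding la_bracket_def bform_def by (rule refl)

lemma bracket_add2:
  "la_bracket q C x (\<lambda>m. y m + z m) = (\<lambda>m. la_bracket q C x y m + la_bracket q C x z m)"
  by (auto simp: la_bracket_bform bform_add2)

lemma bracket_smult2: "la_bracket q C x (\<lambda>m. a * y m) = (\<lambda>m. a * la_bracket q C x y m)"
  by (auto simp: la_bracket_bform bform_smult2)

lemma bracket_zero2: "la_bracket q C x (\<lambda>_. 0) = (\<lambda>_. 0)"
  by (auto simp: la_bracket_bform bform_zero2)

lemma la_idealD:
  assumes "la_ideal q C I"
  shows "I \<subseteq> la_carrier q C" and "(\<lambda>_. 0) \<in> I"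
    and "x \<in> I \<Longrightarrow> y \<in> I \<Longrightarrow> (\<lambda>m. x m + y m) \<in> I"
    and "x \<in> I \<Longrightarrow> (\<lambda>m. a * x m) \<in> I"
    and "x \<in> la_carrier q C \<Longrightarrow> y \<in> I \<Longrightarrow> la_bracket q C x y \<in> I"
  using assms unfolding la_ideal_def by blast+

lemma la_ideal_diff:
  assumes "la_ideal q C I" "x \<in> I" "y \<in> I"
  shows "(\<lambda>m. x m - y m) \<in> I"
  using la_idealD(3)[OF assms(1,2) la_idealD(4)[OF assms(1,3), of "-1"]] by simp

lemma direct_sum_unique:
  assumes I: "la_ideal q C I" and J: "la_ideal q C J" and int: "I \<inter> J = {\<lambda>_. 0}"
    and "i \<in> I" "i' \<in> I" "j \<in> J" "j' \<in> J" and eq: "(\<lambda>m. i m + j m) = (\<lambda>m. i' m + j' m)"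
  shows "i = i'"
proof -
  have "(\<lambda>m. i m - i' m) = (\<lambda>m. j' m - j m)"
    using eq by (simp add: fun_eq_iff algebra_simps)
  moreover have "(\<lambda>m. i m - i' m) \<in> I" "(\<lambda>m. j' m - j m) \<in> J"
    using la_ideal_diff I J assms(4-7) by blast+
  ultimately have "(\<lambda>m. i m - i' m) = (\<lambda>_. 0)" using int by auto
  then show ?thesis by (simp add: fun_eq_iff)
qed

text \<open>A projection onto an ideal along a complementary ideal: a linear idempotent
  map of the carrier that commutes with every inner derivation ad_x.\<close>

locale la_projection =
  fixes q :: nat and C :: "mat list" and P :: "(nat \<Rightarrow> real) \<Rightarrow> (nat \<Rightarrow> real)"
  assumes closed: "x \<in> la_carrier q C \<Longrightarrow> P x \<in> la_carrier q C"
    and additive: "x \<in> la_carrier q C \<Longrightarrow> y \<in> la_carrier q C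
        \<Longrightarrow> P (\<lambda>m. x m + y m) = (\<lambda>m. P x m + P y m)"
    and homogeneous: "x \<in> la_carrier q C \<Longrightarrow> P (\<lambda>m. a * x m) = (\<lambda>m. a * P x m)"
    and idempotent: "x \<in> la_carrier q C \<Longrightarrow> P (P x) = P x"
    and commutes: "x \<in> la_carrier q C \<Longrightarrow> y \<in> la_carrier q C
        \<Longrightarrow> P (la_bracket q C x y) = la_bracket q C x (P y)"
begin

lemma map_zero: "P (\<lambda>_. 0) = (\<lambda>_. 0)"
  using homogeneous[OF carrier_zero, of 0] by simp

lemma map_diff: "x \<in> la_carrier q C \<Longrightarrow> y \<in> la_carrier q C
    \<Longrightarrow> P (\<lambda>m. x m - y m) = (\<lambda>m. P x m - P y m)"
  using additive[OF _ carrier_smult, of x y "-1"] homogeneous[of y "-1"] by simp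

lemma image_ideal: "la_ideal q C {x \<in> la_carrier q C. P x = x}"
  unfolding la_ideal_def
  by (auto simp: carrier_zero map_zero carrier_add additive carrier_smult homogeneous
      bracket_carrier commutes)

lemma kernel_ideal: "la_ideal q C {x \<in> la_carrier q C. P x = (\<lambda>_. 0)}"
  unfolding la_ideal_def
  by (auto simp: carrier_zero map_zero carrier_add additive carrier_smult homogeneous
      bracket_carrier commutes bracket_zero2)

lemma decomposable:
  assumes "x0 \<in> la_carrier q C" "P x0 \<noteq> (\<lambda>_. 0)" and "x1 \<in> la_carrier q C" "P x1 \<noteq> x1"
  shows "\<not> la_indecomposable q C"
proof -
  define I where "I = {x \<in> la_carrier q C. P x = x}"
  define J where "J = {x \<in> la_carrier q C. P x = (\<lambda>_. 0)}"
  have split: "P x \<in> I" "(\<lambda>m. x m - P x m) \<in> J" if "x \<in> la_carrier q C" for x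
    using that closed idempotent map_diff[OF that closed[OF that]]
      carrier_diff[OF that closed[OF that]]
    by (auto simp: I_def J_def)
  have "I \<noteq> {\<lambda>_. 0}"
    using split(1)[OF assms(1)] assms(2) by auto
  moreover have "J \<noteq> {\<lambda>_. 0}"
  proof
    assume "J = {\<lambda>_. 0}"
    then have "(\<lambda>m. x1 m - P x1 m) = (\<lambda>_. 0)" using split(2)[OF assms(3)] by blast
    then show False using assms(4) by (simp add: fun_eq_iff)
  qed
  moreover have "I \<inter> J = {\<lambda>_. 0}"
    using map_zero carrier_zero by (auto simp: I_def J_def)
  moreover have "la_carrier q C = {(\<lambda>m. x m + y m) | x y. x \<in> I \<and> y \<in> J}"
  proof (intro equalityI subsetI)
    fix x assume x: "x \<in> la_carrier q C"
    show "x \<in> {(\<lambda>m. x m + y m) | x y. x \<in> I \<and> y \<in> J}"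
      using split[OF x] by (intro CollectI exI[of _ "P x"] exI[of _ "\<lambda>m. x m - P x m"]) simp
  next
    fix z assume "z \<in> {(\<lambda>m. x m + y m) | x y. x \<in> I \<and> y \<in> J}"
    then show "z \<in> la_carrier q C" unfolding I_def J_def using carrier_add by blast
  qed
  ultimately show ?thesis
    using image_ideal kernel_ideal unfolding la_indecomposable_def I_def J_def by blast
qed

end

lemma decomposition_projection:
  assumes "\<not> la_indecomposable q C"
  obtains P x0 x1 where "la_projection q C P"
    and "x0 \<in> la_carrier q C" "P x0 \<noteq> (\<lambda>_. 0)" and "x1 \<in> la_carrier q C" "P x1 \<noteq> x1"
proof -
  obtain I J where I: "la_ideal q C I" and J: "la_ideal q C J" and nI: "I \<noteq> {\<lambda>_. 0}"
    and nJ: "J \<noteq> {\<lambda>_. 0}" and int: "I \<inter> J = {\<lambda>_. 0}"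
    and span: "la_carrier q C = {(\<lambda>m. x m + y m) | x y. x \<in> I \<and> y \<in> J}"
    using assms unfolding la_indecomposable_def by blast
  define P where "P x = (THE i. i \<in> I \<and> (\<exists>j\<in>J. x = (\<lambda>m. i m + j m)))" for x
  have P_eq: "P (\<lambda>m. i m + j m) = i" if "i \<in> I" "j \<in> J" for i j
    unfolding P_def using that direct_sum_unique[OF I J int] by (rule_tac the_equality) blast+
  have P_I: "P x = x" if "x \<in> I" for x
    using P_eq[OF that la_idealD(2)[OF J]] by simp
  have P_J: "P x = (\<lambda>_. 0)" if "x \<in> J" for x
    using P_eq[OF la_idealD(2)[OF I] that] by simp
  have components: "\<exists>i\<in>I. \<exists>j\<in>J. x = (\<lambda>m. i m + j m)" if "x \<in> la_carrier q C" for x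
    using that span by blast
  have "la_projection q C P"
  proof
    fix x y a assume x: "x \<in> la_carrier q C" and y: "y \<in> la_carrier q C"
    obtain i j where ij: "i \<in> I" "j \<in> J" "x = (\<lambda>m. i m + j m)" using components[OF x] by blast
    obtain i' j' where ij': "i' \<in> I" "j' \<in> J" "y = (\<lambda>m. i' m + j' m)"
      using components[OF y] by blast
    show "P x \<in> la_carrier q C" "P (P x) = P x"
      using ij P_eq P_I la_idealD(1)[OF I] by auto
    have "(\<lambda>m. x m + y m) = (\<lambda>m. (i m + i' m) + (j m + j' m))"
      using ij ij' by (simp add: algebra_simps)
    then show "P (\<lambda>m. x m + y m) = (\<lambda>m. P x m + P y m)"
      using ij ij' P_eq la_idealD(3)[OF I] la_idealD(3)[OF J] by simp
    have "(\<lambda>m. a * x m) = (\<lambda>m. a * i m + a * j m)"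
      using ij by (simp add: algebra_simps)
    then show "P (\<lambda>m. a * x m) = (\<lambda>m. a * P x m)"
      using ij P_eq la_idealD(4)[OF I] la_idealD(4)[OF J] by simp
    have "la_bracket q C x y = (\<lambda>m. la_bracket q C x i' m + la_bracket q C x j' m)"
      using ij' bracket_add2 by simp
    then show "P (la_bracket q C x y) = la_bracket q C x (P y)"
      using ij' P_eq la_idealD(5)[OF I x] la_idealD(5)[OF J x] by simp
  qed
  moreover obtain i where "i \<in> I" "i \<noteq> (\<lambda>_. 0)" using nI la_idealD(2)[OF I] by blast
  moreover obtain j where "j \<in> J" "j \<noteq> (\<lambda>_. 0)" using nJ la_idealD(2)[OF J] by blast
  ultimately show ?thesis
    using that[of P i j] P_I P_J la_idealD(1)[OF I] la_idealD(1)[OF J] by auto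
qed

text \<open>Nondegeneracy: no nonzero vector of R^q is orthogonal to everything for all
  forms B_k.  Equivalently, the center of the Lie algebra is exactly R^p.\<close>

definition nondegenerate :: "nat \<Rightarrow> mat list \<Rightarrow> bool" where
  "nondegenerate q C \<longleftrightarrow>
     (\<forall>v. (\<forall>k<length C. \<forall>y. bform q (C!k) y v = 0) \<longrightarrow> (\<forall>i<q. v i = 0))"

text \<open>A central vector v with v_i \<noteq> 0 for some i < q splits off the ideal R v,
  with the projection x \<mapsto> (x_i / v_i) v.\<close>

lemma indecomposable_nondegenerate:
  assumes "C \<noteq> []" and "la_indecomposable q C"
  shows "nondegenerate q C"
  unfolding nondegenerate_def
proof (intro allI impI)
  fix v i assume central: "\<forall>k<length C. \<forall>y. bform q (C!k) y v = 0" and i: "i < q"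
  show "v i = 0"
  proof (rule ccontr)
    assume vi: "v i \<noteq> 0"
    define w where "w = lowpart q v"
    define P where "P x = (\<lambda>m. (x i / v i) * w m)" for x :: "nat \<Rightarrow> real"
    have wi: "w i = v i" using i by (simp add: w_def lowpart_def)
    have bracket_w: "la_bracket q C x w = (\<lambda>_. 0)" for x
      using central by (auto simp: la_bracket_bform w_def fun_eq_iff)
    have bracket_i: "la_bracket q C x y i = 0" for x y
      using i by (simp add: la_bracket_bform)
    interpret la_projection q C P
    proof
      fix x y a
      show "P x \<in> la_carrier q C" by (simp add: P_def la_carrier_def w_def lowpart_def)
      show "P (P x) = P x" using vi by (simp add: P_def wi)
      show "P (\<lambda>m. x m + y m) = (\<lambda>m. P x m + P y m)"
        by (simp add: P_def add_divide_distrib distrib_right)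
      show "P (\<lambda>m. a * x m) = (\<lambda>m. a * P x m)" by (simp add: P_def mult.assoc)
      show "P (la_bracket q C x y) = la_bracket q C x (P y)"
        unfolding P_def bracket_smult2 bracket_w bracket_i by simp
    qed
    have "P w = w" "w \<noteq> (\<lambda>_. 0)" using vi wi by (auto simp: P_def)
    moreover have "P (unit_vec q) = (\<lambda>_. 0)" "unit_vec q \<noteq> (\<lambda>_. 0)"
      using i by (auto simp: P_def unit_vec_def fun_eq_iff)
    ultimately show False
      using decomposable[of w "unit_vec q"] assms unit_vec_carrier[of 0 C q]
      by (auto simp: w_def lowpart_carrier)
  qed
qed

text \<open>These are the restrictions of ideal projections.\<close>

locale compatible_endo =
  fixes q :: nat and C :: "mat list"
    and E :: "(nat \<Rightarrow> real) \<Rightarrow> (nat \<Rightarrow> real)" and M :: "nat \<Rightarrow> nat \<Rightarrow> real"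
  assumes factors_low: "E x = E (lowpart q x)"
    and into_low: "lowpart q (E x) = E x"
    and additive: "E (\<lambda>m. x m + y m) = (\<lambda>m. E x m + E y m)"
    and homogeneous: "E (\<lambda>m. a * x m) = (\<lambda>m. a * E x m)"
    and idempotent: "E (E x) = E x"
    and intertwines: "k < length C \<Longrightarrow>
        bform q (C!k) y (E x) = (\<Sum>j<length C. M k j * bform q (C!j) y x)"
begin

lemma high_zero: "q \<le> m \<Longrightarrow> E x m = 0"
  using into_low[of x] by (metis lowpart_def not_le)

text \<open>By independence of the forms, idempotency of E makes M idempotent.\<close>

lemma coeff_idempotent:
  assumes so: "so_tuple q C" and li: "lin_indep_tuple C"
    and k: "k < length C" and j: "j < length C"
  shows "(\<Sum>l<length C. M k l * M l j) = M k j"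
proof -
  let ?p = "length C"
  have "(\<Sum>l<?p. (\<Sum>l'<?p. M k l' * M l' l) * bform q (C!l) y x)
      = (\<Sum>l<?p. M k l * bform q (C!l) y x)" for x y
  proof -
    have "(\<Sum>l<?p. (\<Sum>l'<?p. M k l' * M l' l) * bform q (C!l) y x)
        = (\<Sum>l<?p. \<Sum>l'<?p. M k l' * (M l' l * bform q (C!l) y x))"
      by (simp add: sum_distrib_right mult.assoc)
    also have "\<dots> = (\<Sum>l'<?p. M k l' * (\<Sum>l<?p. M l' l * bform q (C!l) y x))"
      by (subst sum.swap) (simp add: sum_distrib_left)
    also have "\<dots> = (\<Sum>l'<?p. M k l' * bform q (C!l') y (E x))"
      by (simp add: intertwines)
    also have "\<dots> = bform q (C!k) y (E (E x))" by (simp add: intertwines[OF k])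
    also have "\<dots> = (\<Sum>l<?p. M k l * bform q (C!l) y x)" by (simp add: idempotent intertwines[OF k])
    finally show ?thesis .
  qed
  then have "(\<Sum>l<?p. ((\<Sum>l'<?p. M k l' * M l' l) - M k l) * bform q (C!l) y x) = 0" for x y
    by (simp add: left_diff_distrib sum_subtractf)
  from lin_indep_bform[OF so li this j] show ?thesis by simp
qed

lemma coeff_scalar:
  assumes so: "so_tuple q C" and li: "lin_indep_tuple C"
    and scalar: "\<And>x. E x = (\<lambda>m. c * lowpart q x m)"
    and k: "k < length C" and j: "j < length C"
  shows "M k j = (if j = k then c else 0)"
proof (rule lin_indep_bform_delta[OF so li k j])
  fix x y
  have "bform q (C!k) y (E x) = c * bform q (C!k) y x"
    by (simp add: scalar bform_smult2 flip: lowpart_smult)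
  then show "(\<Sum>l<length C. M k l * bform q (C!l) y x) = c * bform q (C!k) y x"
    by (simp add: intertwines[OF k])
qed

definition extension :: "(nat \<Rightarrow> real) \<Rightarrow> (nat \<Rightarrow> real)" where
  "extension x = (\<lambda>m. if m < q then E x m
     else if m < q + length C then (\<Sum>j<length C. M (m - q) j * x (q + j)) else 0)"

lemma lowpart_extension: "lowpart q (extension x) = E x"
  using high_zero by (auto simp: lowpart_def extension_def fun_eq_iff)

lemma extension_projection:
  assumes so: "so_tuple q C" and li: "lin_indep_tuple C"
  shows "la_projection q C extension"
proof
  let ?p = "length C"
  fix x y a
  show "extension x \<in> la_carrier q C" by (simp add: extension_def la_carrier_def)
  show "extension (\<lambda>m. x m + y m) = (\<lambda>m. extension x m + extension y m)"
    by (auto simp: extension_def additive distrib_left sum.distrib fun_eq_iff)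
  show "extension (\<lambda>m. a * x m) = (\<lambda>m. a * extension x m)"
    by (auto simp: extension_def homogeneous sum_distrib_left mult_ac fun_eq_iff)
  have "extension (extension x) m = extension x m" for m
  proof (cases "m < q")
    case True
    have "E (extension x) = E x"
      using factors_low[of "extension x"] lowpart_extension idempotent by simp
    then show ?thesis using True by (simp add: extension_def)
  next
    case False
    have "(\<Sum>j<?p. M (m - q) j * extension x (q + j))
        = (\<Sum>j<?p. \<Sum>l<?p. M (m - q) j * M j l * x (q + l))"
      by (simp add: extension_def sum_distrib_left mult.assoc)
    also have "\<dots> = (\<Sum>l<?p. (\<Sum>j<?p. M (m - q) j * M j l) * x (q + l))"
      by (subst sum.swap) (simp add: sum_distrib_right)
    also have "\<dots> = (\<Sum>l<?p. M (m - q) l * x (q + l))" if "m < q + ?p"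
      using that False by (intro sum.cong refl) (simp add: coeff_idempotent[OF so li])
    finally show ?thesis using False by (auto simp: extension_def)
  qed
  then show "extension (extension x) = extension x" by (simp add: fun_eq_iff)
  have "extension (la_bracket q C x y) m = la_bracket q C x (extension y) m" for m
  proof (cases "m < q")
    case True
    have "lowpart q (la_bracket q C x y) = (\<lambda>_. 0)"
      by (auto simp: lowpart_def la_bracket_bform)
    then have "E (la_bracket q C x y) = E (\<lambda>_. 0)"
      using factors_low[of "la_bracket q C x y"] by simp
    then show ?thesis using True homogeneous[of 0 "\<lambda>_. 0"]
      by (simp add: extension_def la_bracket_bform)
  next
    case False
    have "bform q (C ! (m - q)) x (extension y) = bform q (C ! (m - q)) x (E y)"
      by (rule bform_cong) (auto simp: extension_def)
    then show ?thesis using False intertwines[of "m - q" x y]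
      by (auto simp: extension_def la_bracket_bform)
  qed
  then show "extension (la_bracket q C x y) = la_bracket q C x (extension y)"
    by (simp add: fun_eq_iff)
qed

text \<open>For an indecomposable tuple, every compatible endomorphism is 0 or the identity:
  otherwise its extension would split the algebra.\<close>

lemma trivial:
  assumes so: "so_tuple q C" and li: "lin_indep_tuple C" and ind: "la_indecomposable q C"
  shows "(\<forall>x. E x = (\<lambda>_. 0)) \<or> (\<forall>x. E x = lowpart q x)"
proof (rule ccontr)
  assume "\<not> ?thesis"
  then obtain x0 x1 where x0: "E x0 \<noteq> (\<lambda>_. 0)" and x1: "E x1 \<noteq> lowpart q x1" by blast
  interpret ext: la_projection q C extension by (rule extension_projection[OF so li])
  have restrict: "E x = lowpart q (extension (lowpart q x))" for x
    using lowpart_extension factors_low by simp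
  have "extension (lowpart q x0) \<noteq> (\<lambda>_. 0)"
    using x0 restrict[of x0] by (auto simp: lowpart_def)
  moreover have "extension (lowpart q x1) \<noteq> lowpart q x1"
    using x1 restrict[of x1] by auto
  ultimately show False
    using ext.decomposable[OF lowpart_carrier _ lowpart_carrier] ind by blast
qed

end

lemma sum_unit_vec:
  "(\<Sum>j<p. f j * unit_vec (q + j) m) = (if q \<le> m \<and> m < q + p then f (m - q) else (0::real))"
proof (cases "q \<le> m")
  case True
  then have "(\<Sum>j<p. f j * unit_vec (q + j) m) = (\<Sum>j<p. if j = m - q then f j else 0)"
    by (intro sum.cong refl) (auto simp: unit_vec_def)
  then show ?thesis using True by (auto simp: sum.delta)
qed (simp add: unit_vec_def)

lemma bracket_unit_vec:
  "la_bracket q C x y = (\<lambda>m. \<Sum>j<length C. bform q (C!j) x y * unit_vec (q + j) m)"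
  by (simp add: la_bracket_bform sum_unit_vec)

lemma center_combination_carrier:
  "n \<le> length C \<Longrightarrow> (\<lambda>m. \<Sum>j<n. c j * unit_vec (q + j) m) \<in> la_carrier q C"
  by (auto simp: la_carrier_def unit_vec_def)

context la_projection
begin

lemma map_center_combination:
  assumes "n \<le> length C"
  shows "P (\<lambda>m. \<Sum>j<n. c j * unit_vec (q + j) m) = (\<lambda>m. \<Sum>j<n. c j * P (unit_vec (q + j)) m)"
  using assms
proof (induction n)
  case 0
  then show ?case using map_zero by simp
next
  case (Suc n)
  have "P (\<lambda>m. \<Sum>j<Suc n. c j * unit_vec (q + j) m)
      = P (\<lambda>m. (\<Sum>j<n. c j * unit_vec (q + j) m) + c n * unit_vec (q + n) m)" by simp
  also have "\<dots> = (\<lambda>m. P (\<lambda>m. \<Sum>j<n. c j * unit_vec (q + j) m) m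
                        + P (\<lambda>m. c n * unit_vec (q + n) m) m)"
    using Suc.prems
    by (intro additive center_combination_carrier carrier_smult unit_vec_carrier) auto
  also have "\<dots> = (\<lambda>m. \<Sum>j<Suc n. c j * P (unit_vec (q + j)) m)"
    using Suc by (simp add: homogeneous unit_vec_carrier)
  finally show ?case .
qed

lemma center_to_center:
  assumes nd: "nondegenerate q C"
    and z: "z \<in> la_carrier q C" "\<forall>i<q. z i = 0" and i: "i < q"
  shows "P z i = 0"
proof -
  have "bform q (C!k) y (P z) = 0" if k: "k < length C" for k y
  proof -
    have "la_bracket q C (lowpart q y) z = (\<lambda>_. 0)"
      using z(2) by (auto simp: la_bracket_bform bform_zero2)
    moreover have "P (la_bracket q C (lowpart q y) z) = la_bracket q C (lowpart q y) (P z)"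
      by (rule commutes[OF lowpart_carrier z(1)])
    ultimately have "la_bracket q C (lowpart q y) (P z) = (\<lambda>_. 0)"
      by (metis map_zero)
    then have "la_bracket q C (lowpart q y) (P z) (q + k) = 0" by simp
    then show ?thesis using k by (simp add: la_bracket_bform)
  qed
  then show ?thesis using nd i unfolding nondegenerate_def by blast
qed

definition restriction :: "(nat \<Rightarrow> real) \<Rightarrow> (nat \<Rightarrow> real)" where
  "restriction x = lowpart q (P (lowpart q x))"

definition coeff :: "nat \<Rightarrow> nat \<Rightarrow> real" where
  "coeff k j = P (unit_vec (q + j)) (q + k)"

lemma on_center:
  assumes nd: "nondegenerate q C" and z: "z \<in> la_carrier q C" "\<forall>i<q. z i = 0"
  shows "P z = (\<lambda>m. if q \<le> m \<and> m < q + length C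
                      then (\<Sum>l<length C. coeff (m - q) l * z (q + l)) else 0)"
proof -
  let ?p = "length C"
  have "z = (\<lambda>m. \<Sum>l<?p. z (q + l) * unit_vec (q + l) m)"
    unfolding sum_unit_vec using z by (auto simp: la_carrier_def fun_eq_iff)
  then have "P z = (\<lambda>m. \<Sum>l<?p. z (q + l) * P (unit_vec (q + l)) m)"
    using map_center_combination[of ?p "\<lambda>l. z (q + l)"] by simp
  moreover have "P (unit_vec (q + l)) m = 0" if "l < ?p" "m < q \<or> q + ?p \<le> m" for l m
    using that center_to_center[OF nd unit_vec_carrier] closed[OF unit_vec_carrier]
    by (auto simp: unit_vec_def la_carrier_def)
  ultimately show ?thesis by (auto simp: coeff_def mult.commute fun_eq_iff)
qed

text \<open>The restriction is a compatible endomorphism: idempotency survives because P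
  maps the center into itself, and the forms transform by coeff because P commutes with
  brackets, which lie in the center.\<close>

lemma restriction_compatible:
  assumes nd: "nondegenerate q C"
  shows "compatible_endo q C restriction coeff"
proof
  fix x y a k
  show "restriction x = restriction (lowpart q x)" "lowpart q (restriction x) = restriction x"
    by (simp_all add: restriction_def)
  show "restriction (\<lambda>m. x m + y m) = (\<lambda>m. restriction x m + restriction y m)"
    by (simp add: restriction_def lowpart_add additive lowpart_carrier)
  show "restriction (\<lambda>m. a * x m) = (\<lambda>m. a * restriction x m)"
    by (simp add: restriction_def lowpart_smult homogeneous lowpart_carrier)
  define w where "w = P (lowpart q x)"
  have w: "w \<in> la_carrier q C" "P w = w"
    unfolding w_def using closed idempotent lowpart_carrier by auto
  have "P w = (\<lambda>m. P (lowpart q w) m + P (highpart q w) m)"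
    by (subst low_high_split[of w q]) (rule additive[OF lowpart_carrier highpart_carrier[OF w(1)]])
  then have "w i = P (lowpart q w) i" if "i < q" for i
    using center_to_center[OF nd highpart_carrier[OF w(1)], of i] that w(2)
    by (simp add: highpart_def fun_eq_iff)
  then have "lowpart q (P (lowpart q w)) = lowpart q w"
    by (auto simp: lowpart_def fun_eq_iff)
  then show "restriction (restriction x) = restriction x"
    by (simp add: restriction_def w_def)
  assume k: "k < length C"
  have "bform q (C!k) y (restriction x) = bform q (C!k) (lowpart q y) (P (lowpart q x))"
    by (simp add: restriction_def)
  also have "\<dots> = P (la_bracket q C (lowpart q y) (lowpart q x)) (q + k)"
    using k commutes[OF lowpart_carrier lowpart_carrier] by (simp add: la_bracket_bform)
  also have "\<dots> = (\<Sum>j<length C. bform q (C!j) y x * P (unit_vec (q + j)) (q + k))"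
    unfolding bracket_unit_vec by (subst map_center_combination) auto
  also have "\<dots> = (\<Sum>j<length C. coeff k j * bform q (C!j) y x)"
    by (simp add: coeff_def mult.commute)
  finally show "bform q (C!k) y (restriction x) = (\<Sum>j<length C. coeff k j * bform q (C!j) y x)" .
qed

lemma restriction_zero:
  assumes so: "so_tuple q C" and li: "lin_indep_tuple C" and nd: "nondegenerate q C"
    and zero: "\<forall>x. restriction x = (\<lambda>_. 0)" and x: "x \<in> la_carrier q C"
  shows "P x = (\<lambda>_. 0)"
proof -
  interpret E: compatible_endo q C restriction coeff by (rule restriction_compatible[OF nd])
  have "coeff k j = 0" if "k < length C" "j < length C" for k j
    using E.coeff_scalar[OF so li _ that, of 0] zero by simp
  then have center: "P z = (\<lambda>_. 0)" if "z \<in> la_carrier q C" "\<forall>i<q. z i = 0" for z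
    using on_center[OF nd that] by (auto simp: fun_eq_iff intro!: sum.neutral)
  define w where "w = P (lowpart q x)"
  have "w i = 0" if "i < q" for i
    using fun_cong[OF zero[rule_format, of x], of i] that
    by (simp add: w_def restriction_def lowpart_def)
  moreover have "w \<in> la_carrier q C" using closed[OF lowpart_carrier] by (simp add: w_def)
  ultimately
  have "w = (\<lambda>_. 0)"
    using center idempotent[OF lowpart_carrier] unfolding w_def by metis
  moreover have "P (highpart q x) = (\<lambda>_. 0)"
    using center[OF highpart_carrier[OF x]] by (simp add: highpart_def)
  moreover have "P x = (\<lambda>m. P (lowpart q x) m + P (highpart q x) m)"
    by (subst low_high_split[of x q]) (rule additive[OF lowpart_carrier highpart_carrier[OF x]])
  ultimately show ?thesis by (simp add: w_def)
qed

lemma restriction_identity: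
  assumes so: "so_tuple q C" and li: "lin_indep_tuple C" and nd: "nondegenerate q C"
    and ident: "\<forall>x. restriction x = lowpart q x" and x: "x \<in> la_carrier q C"
  shows "P x = x"
proof -
  interpret E: compatible_endo q C restriction coeff by (rule restriction_compatible[OF nd])
  have "coeff k j = (if j = k then 1 else 0)" if "k < length C" "j < length C" for k j
    using E.coeff_scalar[OF so li _ that, of 1] ident by simp
  then have "(\<Sum>l<length C. coeff k l * z (q + l)) = (\<Sum>l<length C. if l = k then z (q + l) else 0)"
    if "k < length C" for k z
    using that by (intro sum.cong refl) simp
  then have "(\<Sum>l<length C. coeff k l * z (q + l)) = z (q + k)" if "k < length C" for k z
    using that by simp
  then have center: "P z = z" if z: "z \<in> la_carrier q C" "\<forall>i<q. z i = 0" for z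
    using on_center[OF nd z] z by (auto simp: la_carrier_def fun_eq_iff)
  define w where "w = P (lowpart q x)"
  have w: "w \<in> la_carrier q C" "P w = w" "lowpart q w = lowpart q x"
    using closed idempotent lowpart_carrier ident by (auto simp: w_def restriction_def)
  have "P w = (\<lambda>m. P (lowpart q w) m + P (highpart q w) m)"
    by (subst low_high_split[of w q]) (rule additive[OF lowpart_carrier highpart_carrier[OF w(1)]])
  also have "\<dots> = (\<lambda>m. w m + highpart q w m)"
    using center[OF highpart_carrier[OF w(1)]] w(3) by (simp add: w_def highpart_def)
  finally have "w = (\<lambda>m. w m + highpart q w m)" using w(2) by simp
  then have "w = lowpart q x"
    using low_high_split[of w q] w(3) by (auto simp: fun_eq_iff)
  moreover have "P x = (\<lambda>m. P (lowpart q x) m + P (highpart q x) m)"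
    by (subst low_high_split[of x q]) (rule additive[OF lowpart_carrier highpart_carrier[OF x]])
  ultimately show ?thesis
    using center[OF highpart_carrier[OF x]] low_high_split[of x q] by (simp add: w_def highpart_def)
qed

end

text \<open>The adjoin of
  the statement is the case t = length A - 1; multiple adjoins use a fixed t.\<close>

definition adjoin_at :: "nat \<Rightarrow> nat \<Rightarrow> mat list \<Rightarrow> mat list \<Rightarrow> mat list" where
  "adjoin_at t qA A B = A[t := mat_add (A!t) (shift_mat qA (hd B))] @ map (shift_mat qA) (tl B)"

lemma sum_shift_zeros:
  "\<forall>i<a. g i = 0 \<Longrightarrow> (\<Sum>i<a+b. g i) = (\<Sum>i<b. g (a+i)::real)" for a b :: nat
  by (induction b) auto

lemma sum_initial_segment: "n \<le> p \<Longrightarrow> (\<Sum>j<p. if j < n then g j else 0) = (\<Sum>j<n. g j :: real)"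
  for n p :: nat
proof -
  assume "n \<le> p"
  have "(\<Sum>j<p. if j < n then g j else 0) = (\<Sum>j\<in>{..<p} \<inter> {j. j < n}. g j)"
    by (subst sum.inter_restrict) auto
  also have "{..<p} \<inter> {j. j < n} = {..<n}" using \<open>n \<le> p\<close> by auto
  finally show ?thesis .
qed

lemma bform_block_low:
  assumes "is_so qA M"
  shows "bform (qA + qB) M y x = bform qA M y x"
proof -
  have z: "M i j = 0" if "qA \<le> i \<or> qA \<le> j" for i j using is_so_zero[OF assms that] .
  have "bform (qA + qB) M y x = (\<Sum>i<qA. \<Sum>j<qA+qB. y i * x j * M i j)"
    unfolding bform_def by (rule sum.mono_neutral_right) (auto simp: z)
  also have "\<dots> = (\<Sum>i<qA. \<Sum>j<qA. y i * x j * M i j)"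
    by (intro sum.cong refl sum.mono_neutral_right) (auto simp: z)
  finally show ?thesis by (simp add: bform_def)
qed

lemma bform_block_high:
  "bform (qA + qB) (shift_mat qA N) y x = bform qB N (shift_down qA y) (shift_down qA x)"
proof -
  have "bform (qA + qB) (shift_mat qA N) y x
      = (\<Sum>i<qB. \<Sum>j<qA+qB. y (qA + i) * x j * shift_mat qA N (qA + i) j)"
    unfolding bform_def by (rule sum_shift_zeros) (simp add: shift_mat_def)
  also have "\<dots> = (\<Sum>i<qB. \<Sum>j<qB. y (qA + i) * x (qA + j) * shift_mat qA N (qA + i) (qA + j))"
    by (intro sum.cong refl sum_shift_zeros) (simp add: shift_mat_def)
  finally show ?thesis by (simp add: bform_def shift_down_def shift_mat_def)
qed

locale adjoin_setting =
  fixes qA qB :: nat and A B :: "mat list" and t :: nat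
  assumes so_A: "so_tuple qA A" and so_B: "so_tuple qB B"
    and A_nonempty: "A \<noteq> []" and B_nonempty: "B \<noteq> []" and t_less: "t < length A"
begin

abbreviation "nA \<equiv> length A"
abbreviation "nB \<equiv> length B"
abbreviation "p \<equiv> nA + nB - 1"
abbreviation "q \<equiv> qA + qB"
abbreviation "C \<equiv> adjoin_at t qA A B"

text \<open>Component k of C contains a component of B iff from_B k; that component is
  B ! B_index k, and B_pos j is the position of B ! j in C.\<close>

definition from_B :: "nat \<Rightarrow> bool" where "from_B k \<longleftrightarrow> k = t \<or> nA \<le> k"
definition B_index :: "nat \<Rightarrow> nat" where "B_index k = (if k = t then 0 else k - nA + 1)"
definition B_pos :: "nat \<Rightarrow> nat" where "B_pos j = (if j = 0 then t else nA + j - 1)"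

lemma nB_pos: "0 < nB" using B_nonempty by simp

lemma length_C: "length C = p"
proof -
  have "length C = nA + (nB - 1)" by (simp add: adjoin_at_def)
  then show ?thesis using nB_pos by linarith
qed

lemma nA_le_p: "nA \<le> p" using nB_pos by linarith

lemma nth_C:
  assumes k: "k < p"
  shows "C ! k = (\<lambda>i j. (if k < nA then (A!k) i j else 0)
     + (if from_B k then shift_mat qA (B ! B_index k) i j else 0))"
proof (cases "k < nA")
  case True
  then show ?thesis using t_less B_nonempty
    by (cases "k = t") (auto simp: adjoin_at_def nth_append mat_add_def from_B_def B_index_def
        hd_conv_nth)
next
  case False
  then show ?thesis using k t_less B_nonempty
    by (auto simp: adjoin_at_def nth_append from_B_def B_index_def nth_tl)
qed

lemma is_so_A: "k < nA \<Longrightarrow> is_so qA (A!k)" using so_A unfolding so_tuple_def by simp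
lemma is_so_B: "j < nB \<Longrightarrow> is_so qB (B!j)" using so_B unfolding so_tuple_def by simp

lemma B_index_less: "k < p \<Longrightarrow> from_B k \<Longrightarrow> B_index k < nB"
  using nB_pos by (auto simp: B_index_def from_B_def)

lemma B_pos_props: "j < nB \<Longrightarrow> B_pos j < p \<and> from_B (B_pos j) \<and> B_index (B_pos j) = j
    \<and> (B_pos j < nA \<longleftrightarrow> j = 0)"
  using t_less nA_le_p by (auto simp: B_pos_def from_B_def B_index_def)

lemma bform_C:
  assumes k: "k < p"
  shows "bform q (C!k) y x = (if k < nA then bform qA (A!k) y x else 0)
     + (if from_B k then bform qB (B ! B_index k) (shift_down qA y) (shift_down qA x) else 0)"
proof -
  have zero: "bform q (\<lambda>_ _. 0) y x = 0" by (simp add: bform_def)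
  have "bform q (C!k) y x = bform q (\<lambda>i j. if k < nA then (A!k) i j else 0) y x
      + bform q (\<lambda>i j. if from_B k then shift_mat qA (B ! B_index k) i j else 0) y x"
    unfolding nth_C[OF k] by (rule bform_mat_add)
  then show ?thesis
    by (cases "k < nA"; cases "from_B k")
      (simp_all add: zero bform_block_low[OF is_so_A] bform_block_high)
qed

lemma sum_from_B: "(\<Sum>k<p. if from_B k then g k else 0) = (\<Sum>j<nB. g (B_pos j) :: real)"
proof -
  have "(\<Sum>k<p. if from_B k then g k else 0) = sum g ({..<p} \<inter> {k. from_B k})"
    by (subst sum.inter_restrict) auto
  also have "{..<p} \<inter> {k. from_B k} = B_pos ` {..<nB}"
  proof (intro equalityI subsetI)
    fix k assume "k \<in> {..<p} \<inter> {k. from_B k}"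
    then show "k \<in> B_pos ` {..<nB}"
      using nB_pos by (intro image_eqI[of _ _ "if k = t then 0 else k - nA + 1"])
        (auto simp: B_pos_def from_B_def)
  qed (use B_pos_props in auto)
  also have "sum g (B_pos ` {..<nB}) = (\<Sum>j<nB. g (B_pos j))"
    by (rule sum.reindex[unfolded comp_def])
      (use t_less in \<open>auto simp: inj_on_def B_pos_def split: if_splits\<close>)
  finally show ?thesis .
qed

lemma so_C: "so_tuple q C"
  unfolding so_tuple_def
proof
  fix N assume "N \<in> set C"
  then obtain k where k: "k < p" "N = C ! k" using length_C by (metis in_set_conv_nth)
  show "is_so q N"
    unfolding k(2) nth_C[OF k(1)]
  proof (rule is_so_add; rule is_so_if)
    show "is_so q (A!k)" if "k < nA" using is_so_mono[OF is_so_A[OF that]] by simp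
    show "is_so q (shift_mat qA (B ! B_index k))" if "from_B k"
      by (rule is_so_shift[OF is_so_B[OF B_index_less[OF k(1) that]]])
  qed
qed

lemma C_nonempty: "C \<noteq> []" using length_C t_less nA_le_p by auto


lemma bform_C_low: "k < nA \<Longrightarrow> bform q (C!k) (lowpart qA y) x = bform qA (A!k) y x"
  using nA_le_p by (simp add: bform_C bform_zero1 shift_down_lowpart)

lemma bform_C_high:
  "j < nB \<Longrightarrow> bform q (C ! B_pos j) (shift_up qA y) x = bform qB (B!j) y (shift_down qA x)"
  using B_pos_props[of j] by (simp add: bform_C bform_zero1 shift_up_below)

lemma lin_indep_C:
  assumes li_A: "lin_indep_tuple A" and li_B: "lin_indep_tuple B"
  shows "lin_indep_tuple C"
  unfolding lin_indep_tuple_def length_C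
proof (intro allI impI)
  fix c :: "nat \<Rightarrow> real" and k
  assume rel: "\<forall>i j. (\<Sum>k<p. c k * (C ! k) i j) = 0" and k: "k < p"
  have entry: "(\<Sum>k<p. c k * (C ! k) i j) = (\<Sum>k<p. c k * ((if k < nA then (A!k) i j else 0)
     + (if from_B k then shift_mat qA (B ! B_index k) i j else 0)))" for i j
    by (intro sum.cong refl) (simp add: nth_C)
  have coeff_A: "c k = 0" if "k < nA" for k
  proof -
    have "(\<Sum>k<nA. c k * (A!k) i j) = 0" for i j
    proof (cases "i < qA \<and> j < qA")
      case True
      have "(\<Sum>k<p. c k * (C ! k) i j) = (\<Sum>k<p. if k < nA then c k * (A!k) i j else 0)"
        unfolding entry using True by (intro sum.cong refl) (auto simp: shift_mat_def)
      then show ?thesis using rel sum_initial_segment[OF nA_le_p] by simp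
    next
      case False
      then show ?thesis using is_so_zero[OF is_so_A] by (auto intro!: sum.neutral)
    qed
    then show ?thesis using li_A that unfolding lin_indep_tuple_def by blast
  qed
  have coeff_B: "c (B_pos j) = 0" if "j < nB" for j
  proof -
    have "(\<Sum>j'<nB. c (B_pos j') * (B!j') i j) = 0" for i j
    proof -
      have "(\<Sum>k<p. c k * (C ! k) (qA + i) (qA + j))
          = (\<Sum>k<p. if from_B k then c k * (B ! B_index k) i j else 0)"
        unfolding entry using coeff_A is_so_zero[OF is_so_A]
        by (intro sum.cong refl) (auto simp: shift_mat_def)
      also have "\<dots> = (\<Sum>j'<nB. c (B_pos j') * (B ! B_index (B_pos j')) i j)"
        by (rule sum_from_B)
      also have "\<dots> = (\<Sum>j'<nB. c (B_pos j') * (B!j') i j)"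
        by (intro sum.cong refl) (simp add: B_pos_props)
      finally show ?thesis using rel by simp
    qed
    then show ?thesis
      using li_B[unfolded lin_indep_tuple_def, rule_format, of "\<lambda>j'. c (B_pos j')"] that by blast
  qed
  show "c k = 0"
  proof (cases "k < nA")
    case False
    then have "k = B_pos (k - nA + 1)" "k - nA + 1 < nB" using k by (auto simp: B_pos_def)
    then show ?thesis using coeff_B by metis
  qed (rule coeff_A)
qed

lemma nondegenerate_C:
  assumes nd_A: "nondegenerate qA A" and nd_B: "nondegenerate qB B"
  shows "nondegenerate q C"
  unfolding nondegenerate_def length_C
proof (intro allI impI)
  fix v i assume central: "\<forall>k<p. \<forall>y. bform q (C!k) y v = 0" and i: "i < q"
  have "bform qA (A!k) y v = 0" if "k < nA" for k y
    using central that nA_le_p bform_C_low[OF that, of y v] by simp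
  then have low: "\<forall>i<qA. v i = 0" using nd_A unfolding nondegenerate_def by blast
  have "bform qB (B!j) y (shift_down qA v) = 0" if "j < nB" for j y
    using central bform_C_high[OF that, of y v] B_pos_props[OF that] by simp
  then have "\<forall>i<qB. shift_down qA v i = 0" using nd_B unfolding nondegenerate_def by blast
  then have high: "\<forall>i<qB. v (qA + i) = 0" by (simp add: shift_down_apply)
  show "v i = 0"
    using low high[rule_format, of "i - qA"] i by (cases "i < qA") auto
qed


lemma bform_C_cross:
  assumes "k < p"
  shows "\<forall>i<qA. y i = 0 \<Longrightarrow> \<forall>i<qB. x (qA + i) = 0 \<Longrightarrow> bform q (C!k) y x = 0"
    and "\<forall>i<qB. y (qA + i) = 0 \<Longrightarrow> \<forall>i<qA. x i = 0 \<Longrightarrow> bform q (C!k) y x = 0"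
  using assms by (simp_all add: bform_C bform_zero1 bform_zero2 shift_down_apply)

end

locale adjoin_compatible =
  adjoin_setting qA qB A B t + compatible_endo "qA + qB" "adjoin_at t qA A B" E M
  for qA qB A B t E M +
  assumes nd_A: "nondegenerate qA A" and nd_B: "nondegenerate qB B"
begin

definition E_A :: "(nat \<Rightarrow> real) \<Rightarrow> (nat \<Rightarrow> real)" where
  "E_A x = E (lowpart qA x)"

definition E_B :: "(nat \<Rightarrow> real) \<Rightarrow> (nat \<Rightarrow> real)" where
  "E_B x = shift_down qA (E (shift_up qA (lowpart qB x)))"

definition M_B :: "nat \<Rightarrow> nat \<Rightarrow> real" where
  "M_B j j' = M (B_pos j) (B_pos j')"

text \<open>E maps each block into itself; this uses nondegeneracy of B, resp. of A,
  together with the orthogonality of the blocks.\<close>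

lemma preserves_low_block: "qA \<le> i \<Longrightarrow> E (lowpart qA x) i = 0"
proof (cases "i < q")
  case True
  assume i: "qA \<le> i"
  have "bform qB (B!j) y (shift_down qA (E (lowpart qA x))) = 0" if j: "j < nB" for j y
  proof -
    have "bform qB (B!j) y (shift_down qA (E (lowpart qA x)))
        = (\<Sum>k<p. M (B_pos j) k * bform q (C!k) (shift_up qA y) (lowpart qA x))"
      using B_pos_props[OF j] length_C by (simp flip: bform_C_high[OF j] add: intertwines)
    also have "\<dots> = 0"
      by (intro sum.neutral ballI) (simp add: bform_C_cross(1) shift_up_below lowpart_def)
    finally show ?thesis .
  qed
  then have "shift_down qA (E (lowpart qA x)) (i - qA) = 0"
    using nd_B True i unfolding nondegenerate_def by auto
  then show ?thesis using i by (simp add: shift_down_apply)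
qed (simp add: high_zero)

lemma preserves_high_block:
  assumes x: "\<forall>i<qA. x i = 0" and i: "i < qA"
  shows "E x i = 0"
proof -
  have "bform qA (A!k) y (E x) = 0" if k: "k < nA" for k y
  proof -
    have kp: "k < p" using k nA_le_p by linarith
    have "bform qA (A!k) y (E x) = (\<Sum>j<p. M k j * bform q (C!j) (lowpart qA y) x)"
      using kp length_C by (simp flip: bform_C_low[OF k] add: intertwines)
    also have "\<dots> = 0"
      using x by (intro sum.neutral ballI) (simp add: bform_C_cross(2) lowpart_def)
    finally show ?thesis .
  qed
  then show ?thesis using nd_A i unfolding nondegenerate_def by blast
qed

lemma high_block_form: "\<forall>i<qA. w i = 0 \<Longrightarrow> E w = shift_up qA (lowpart qB (shift_down qA (E w)))"
  using preserves_high_block high_zero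
  by (auto simp: shift_up_def lowpart_def shift_down_def fun_eq_iff)

lemma decompose: "E x = (\<lambda>m. E_A x m + shift_up qA (lowpart qB (E_B (shift_down qA x))) m)"
proof -
  define w where "w = shift_up qA (lowpart qB (shift_down qA x))"
  have "E x = E (\<lambda>m. lowpart qA x m + w m)"
    unfolding w_def using factors_low[of x] lowpart_split[of qA qB x] by simp
  also have "\<dots> = (\<lambda>m. E_A x m + E w m)" by (simp add: additive E_A_def)
  also have "E w = shift_up qA (lowpart qB (shift_down qA (E w)))"
    by (rule high_block_form) (simp add: w_def shift_up_below)
  also have "shift_down qA (E w) = E_B (shift_down qA x)" by (simp add: E_B_def w_def)
  finally show ?thesis .
qed

lemma compatible_A: "compatible_endo qA A E_A M"
proof
  fix x y a k
  show "E_A x = E_A (lowpart qA x)" by (simp add: E_A_def)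
  show "lowpart qA (E_A x) = E_A x"
    using preserves_low_block by (auto simp: E_A_def lowpart_def fun_eq_iff)
  then show "E_A (E_A x) = E_A x"
    by (metis E_A_def idempotent)
  show "E_A (\<lambda>m. x m + y m) = (\<lambda>m. E_A x m + E_A y m)"
    by (simp add: E_A_def lowpart_add additive)
  show "E_A (\<lambda>m. a * x m) = (\<lambda>m. a * E_A x m)"
    by (simp add: E_A_def lowpart_smult homogeneous)
  assume k: "k < nA"
  have kp: "k < p" using k nA_le_p by linarith
  have "bform qA (A!k) y (E_A x) = (\<Sum>j<p. M k j * bform q (C!j) (lowpart qA y) (lowpart qA x))"
    using kp length_C by (simp flip: bform_C_low[OF k] add: intertwines E_A_def)
  also have "\<dots> = (\<Sum>j<p. if j < nA then M k j * bform qA (A!j) y x else 0)"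
    by (intro sum.cong refl) (simp add: bform_C bform_zero1 shift_down_lowpart)
  also have "\<dots> = (\<Sum>j<nA. M k j * bform qA (A!j) y x)"
    by (rule sum_initial_segment[OF nA_le_p])
  finally show "bform qA (A!k) y (E_A x) = (\<Sum>j<nA. M k j * bform qA (A!j) y x)" .
qed

lemma compatible_B: "compatible_endo qB B E_B M_B"
proof
  fix x y a j
  show "E_B x = E_B (lowpart qB x)" by (simp add: E_B_def)
  show "lowpart qB (E_B x) = E_B x"
    using high_zero by (auto simp: E_B_def lowpart_def shift_down_def fun_eq_iff)
  have "shift_up qA (lowpart qB (shift_down qA (E (shift_up qA (lowpart qB x)))))
      = E (shift_up qA (lowpart qB x))"
    by (rule high_block_form[symmetric]) (simp add: shift_up_below)
  then show "E_B (E_B x) = E_B x" by (simp add: E_B_def idempotent)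
  show "E_B (\<lambda>m. x m + y m) = (\<lambda>m. E_B x m + E_B y m)"
    by (simp add: E_B_def lowpart_add shift_up_add additive shift_down_add)
  show "E_B (\<lambda>m. a * x m) = (\<lambda>m. a * E_B x m)"
    by (simp add: E_B_def lowpart_smult shift_up_smult homogeneous shift_down_smult)
  assume j: "j < nB"
  have "bform qB (B!j) y (E_B x)
      = (\<Sum>k<p. M (B_pos j) k * bform q (C!k) (shift_up qA y) (shift_up qA (lowpart qB x)))"
    using B_pos_props[OF j] length_C by (simp flip: bform_C_high[OF j] add: intertwines E_B_def)
  also have "\<dots> = (\<Sum>k<p. if from_B k then M (B_pos j) k * bform qB (B ! B_index k) y x else 0)"
    by (intro sum.cong refl) (simp add: bform_C bform_zero1 shift_up_below)
  also have "\<dots> = (\<Sum>j'<nB. M (B_pos j) (B_pos j') * bform qB (B ! B_index (B_pos j')) y x)"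
    by (rule sum_from_B)
  also have "\<dots> = (\<Sum>j'<nB. M_B j j' * bform qB (B!j') y x)"
    by (intro sum.cong refl) (simp add: B_pos_props M_B_def)
  finally show "bform qB (B!j) y (E_B x) = (\<Sum>j'<nB. M_B j j' * bform qB (B!j') y x)" .
qed


text \<open>Both induced maps are 0 or the identity, and they share the coefficient M t t
  (component t of C involves A ! t and B ! 0), so they agree; hence E is trivial.\<close>

lemma trivial_adjoin:
  assumes li_A: "lin_indep_tuple A" and li_B: "lin_indep_tuple B"
    and ind_A: "la_indecomposable qA A" and ind_B: "la_indecomposable qB B"
  shows "(\<forall>x. E x = (\<lambda>_. 0)) \<or> (\<forall>x. E x = lowpart q x)"
proof -
  interpret EA: compatible_endo qA A E_A M by (rule compatible_A)
  interpret EB: compatible_endo qB B E_B M_B by (rule compatible_B)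
  have coeff_A: "M t t = c" if "\<forall>x. E_A x = (\<lambda>m. c * lowpart qA x m)" for c
    using EA.coeff_scalar[OF so_A li_A _ t_less t_less] that by simp
  have coeff_B: "M t t = c" if "\<forall>x. E_B x = (\<lambda>m. c * lowpart qB x m)" for c
    using EB.coeff_scalar[OF so_B li_B _ nB_pos nB_pos] that by (simp add: M_B_def B_pos_def)
  consider "\<forall>x. E_A x = (\<lambda>_. 0)" | "\<forall>x. E_A x = lowpart qA x"
    using EA.trivial[OF so_A li_A ind_A] by blast
  then show ?thesis
  proof cases
    case 1
    then have "\<not> (\<forall>x. E_B x = lowpart qB x)" using coeff_A[of 0] coeff_B[of 1] by auto
    then have "\<forall>x. E_B x = (\<lambda>_. 0)" using EB.trivial[OF so_B li_B ind_B] by blast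
    then show ?thesis using 1 decompose by (simp add: shift_up_def lowpart_def)
  next
    case 2
    then have "\<not> (\<forall>x. E_B x = (\<lambda>_. 0))" using coeff_A[of 1] coeff_B[of 0] by auto
    then have "\<forall>x. E_B x = lowpart qB x" using EB.trivial[OF so_B li_B ind_B] by blast
    then show ?thesis using 2 decompose lowpart_split[of qA qB] by simp
  qed
qed

end

context adjoin_setting
begin

theorem indecomposable_C:
  assumes li_A: "lin_indep_tuple A" and li_B: "lin_indep_tuple B"
    and ind_A: "la_indecomposable qA A" and ind_B: "la_indecomposable qB B"
  shows "la_indecomposable q C"
proof (rule ccontr)
  assume "\<not> la_indecomposable q C"
  then obtain P x0 x1 where proj: "la_projection q C P"
    and x0: "x0 \<in> la_carrier q C" "P x0 \<noteq> (\<lambda>_. 0)" and x1: "x1 \<in> la_carrier q C" "P x1 \<noteq> x1"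
    by (rule decomposition_projection)
  interpret P: la_projection q C P by (rule proj)
  have nd_A: "nondegenerate qA A" by (rule indecomposable_nondegenerate[OF A_nonempty ind_A])
  have nd_B: "nondegenerate qB B" by (rule indecomposable_nondegenerate[OF B_nonempty ind_B])
  have nd_C: "nondegenerate q C" by (rule nondegenerate_C[OF nd_A nd_B])
  have li_C: "lin_indep_tuple C" by (rule lin_indep_C[OF li_A li_B])
  interpret E: adjoin_compatible qA qB A B t P.restriction P.coeff
    using P.restriction_compatible[OF nd_C] nd_A nd_B
    by (intro adjoin_compatible.intro adjoin_setting_axioms adjoin_compatible_axioms.intro)
  show False
    using E.trivial_adjoin[OF li_A li_B ind_A ind_B] x0 x1
      P.restriction_zero[OF so_C li_C nd_C] P.restriction_identity[OF so_C li_C nd_C]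
    by blast
qed

end

definition admissible :: "nat \<times> mat list \<Rightarrow> bool" where
  "admissible qA \<longleftrightarrow> so_tuple (fst qA) (snd qA) \<and> snd qA \<noteq> [] \<and> lin_indep_tuple (snd qA)
     \<and> la_indecomposable (fst qA) (snd qA)"

lemma admissible_adjoin_at:
  assumes "admissible (qA, A)" "admissible (qB, B)" "t < length A"
  shows "admissible (qA + qB, adjoin_at t qA A B)"
proof -
  interpret adjoin_setting qA qB A B t using assms by unfold_locales (simp_all add: admissible_def)
  show ?thesis
    using so_C C_nonempty lin_indep_C indecomposable_C assms by (simp add: admissible_def)
qed

lemma length_adjoin_at: "length A \<le> length (adjoin_at t qA A B)"
  by (simp add: adjoin_at_def)

lemma adjoin_last: "A \<noteq> [] \<Longrightarrow> adjoin q A B = adjoin_at (length A - 1) q A B"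
  by (induction A rule: rev_induct) (simp_all add: adjoin_def adjoin_at_def list_update_append)

lemma admissible_iterated_adjoin:
  "admissible acc \<Longrightarrow> \<forall>x\<in>set xs. admissible x
    \<Longrightarrow> admissible (foldl (\<lambda>(q, C) (q', B). (q + q', adjoin q C B)) acc xs)"
proof (induction xs arbitrary: acc)
  case (Cons x xs)
  obtain q C q' B where acc: "acc = (q, C)" and x: "x = (q', B)" by fastforce
  have "admissible (q + q', adjoin q C B)"
    using Cons.prems acc x admissible_adjoin_at[of q C q' B "length C - 1"]
    by (auto simp: admissible_def adjoin_last)
  then show ?case using Cons.IH Cons.prems(2) acc x by simp
qed simp

lemma multi_adjoin_snoc:
  assumes "A \<noteq> []"
  shows "multi_adjoin q0 A (Ds @ [D])
    = adjoin_at (length A - 1) (q0 + sum_list (map fst Ds)) (multi_adjoin q0 A Ds) (snd D)"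
proof -
  let ?n = "length Ds"
  let ?off = "madj_offset q0 Ds"
  let ?s = "q0 + sum_list (map fst Ds)"
  have offset: "madj_offset q0 (Ds @ [D]) l = ?off l" if "l \<le> ?n" for l
    using that by (simp add: madj_offset_def)
  have offset_last: "?off ?n = ?s" by (simp add: madj_offset_def)
  define g where "g = (\<lambda>i j. last A i j + (\<Sum>l<?n. shift_mat (?off l) (hd (snd (Ds ! l))) i j))"
  define f where
    "f = (\<lambda>l. map (shift_mat (madj_offset q0 (Ds @ [D]) l)) (tl (snd ((Ds @ [D]) ! l))))"
  have "(\<lambda>i j. last A i j + (\<Sum>l<length (Ds @ [D]). shift_mat (madj_offset q0 (Ds @ [D]) l)
        (hd (snd ((Ds @ [D]) ! l))) i j)) = mat_add g (shift_mat ?s (hd (snd D)))"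
    by (simp add: g_def mat_add_def offset offset_last nth_append add.assoc)
  moreover have "concat (map f [0..<length (Ds @ [D])])
      = concat (map (\<lambda>l. map (shift_mat (?off l)) (tl (snd (Ds ! l)))) [0..<?n])
        @ map (shift_mat ?s) (tl (snd D))"
  proof -
    have "concat (map f [0..<length (Ds @ [D])]) = concat (map f [0..<?n]) @ f ?n" by simp
    also have "map f [0..<?n] = map (\<lambda>l. map (shift_mat (?off l)) (tl (snd (Ds ! l)))) [0..<?n]"
      by (rule map_cong) (simp_all add: f_def offset nth_append)
    also have "f ?n = map (shift_mat ?s) (tl (snd D))"
      by (simp add: f_def offset offset_last)
    finally show ?thesis .
  qed
  ultimately show ?thesis
    using assms unfolding multi_adjoin_def adjoin_at_def f_def[symmetric]
    by (simp add: g_def list_update_append nth_append)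
qed

text \<open>By induction over the adjoined tuples, the multiple adjoin is admissible; the
  length bound keeps the last position of A inside the current tuple.\<close>

lemma admissible_multi_adjoin:
  assumes A: "admissible (q0, A)" and Ds: "\<forall>x\<in>set Ds. admissible x"
  shows "admissible (q0 + sum_list (map fst Ds), multi_adjoin q0 A Ds)
    \<and> length A \<le> length (multi_adjoin q0 A Ds)"
  using Ds
proof (induction Ds rule: rev_induct)
  case Nil
  then show ?case using A by (simp add: admissible_def multi_adjoin_def)
next
  case (snoc D Ds)
  obtain q' B where D: "D = (q', B)" by fastforce
  have A_nonempty: "A \<noteq> []" using A by (simp add: admissible_def)
  have IH: "admissible (q0 + sum_list (map fst Ds), multi_adjoin q0 A Ds)"
    "length A \<le> length (multi_adjoin q0 A Ds)" using snoc by auto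
  then have "length A - 1 < length (multi_adjoin q0 A Ds)" using A_nonempty by (cases A) auto
  then show ?case
    using admissible_adjoin_at[OF IH(1), of q' B "length A - 1"] IH(2) snoc.prems D
      multi_adjoin_snoc[OF A_nonempty] length_adjoin_at[of "multi_adjoin q0 A Ds"]
    by (auto simp: add.assoc intro: order_trans)
qed

theorem mainTheorem11:
  fixes As :: "(nat \<times> mat list) list"
  assumes "As \<noteq> []"
    and "\<forall>(q, A) \<in> set As. so_tuple q A \<and> A \<noteq> [] \<and> lin_indep_tuple A \<and> la_indecomposable q A"
  shows "la_indecomposable (fst (iter_adjoin As)) (snd (iter_adjoin As))
       \<and> la_indecomposable (fst (hd As) + sum_list (map fst (tl As)))
            (multi_adjoin (fst (hd As)) (snd (hd As)) (tl As))"
proof -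
  have all: "\<forall>x\<in>set As. admissible x" using assms(2) by (auto simp: admissible_def)
  then have hd: "admissible (hd As)" and tl: "\<forall>x\<in>set (tl As). admissible x"
    using assms(1) by (simp_all add: list.set_sel)
  have "admissible (iter_adjoin As)"
    unfolding iter_adjoin_def by (rule admissible_iterated_adjoin[OF hd tl])
  moreover have "admissible (fst (hd As) + sum_list (map fst (tl As)),
      multi_adjoin (fst (hd As)) (snd (hd As)) (tl As))"
    using admissible_multi_adjoin[of "fst (hd As)" "snd (hd As)" "tl As"] hd tl by simp
  ultimately show ?thesis by (simp add: admissible_def)
qed

end
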